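(* Let $0<q<1$ and let $l$ be a non-negative integer. Then \[ q^{2}(1+q)^{2}[l+1]_{q^{2}}+q^{2l+4}+[l+1]_{q^{2}}!\sum_{n=1}^{\infty}\frac{(1/2|q^{2})_{n}^{2}}{[n+1]_{q^{2}}!\,[l+n+1]_{q^{2}}!}\,q^{2(l+2)(n+1)} =\frac{(1+q)^{2}\,([l+1]_{q^{2}}!)^{2}}{\pi_{q}\,(1/2|q^{2})_{l+1}^{2}}\,q^{9/4}. \]
   Context: Let $0<q<1$ and write $q^{x}=e^{x\log q}$. $[z]_{q^2}=\frac{1-q^{2z}}{1-q^2}$; $[0]_{q^2}!=1$, $[n]_{q^2}!=\prod_{k=1}^n[k]_{q^2}$; $(1/2|q^2)_n=\prod_{k=0}^{n-1}[1/2+k]_{q^2}$ (empty product $=1$). With $(z;q)_\infty=\prod_{k\ge0}(1-zq^k)$, $\pi_q=(1-q^2)q^{1/4}\frac{(q^2;q^2)_\infty^2}{(q;q^2)_\infty^2}$. *)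

theory Defs
  imports "HOL-Analysis.Analysis"
begin

text \<open>q-number [z]_{q^2} = (1 - q^{2z})/(1 - q^2), with q^x = exp(x log q) = q powr x.\<close>
definition qnum :: "real \<Rightarrow> real \<Rightarrow> real" where
  "qnum q z = (1 - q powr (2 * z)) / (1 - q\<^sup>2)"

definition qfact :: "real \<Rightarrow> nat \<Rightarrow> real" where
  "qfact q n = (\<Prod>k\<in>{1..n}. qnum q (real k))"

definition qhalf_poch :: "real \<Rightarrow> nat \<Rightarrow> real" where
  "qhalf_poch q n = (\<Prod>k\<in>{0..<n}. qnum q (1/2 + real k))"

definition qpoch_inf :: "real \<Rightarrow> real \<Rightarrow> real" where
  "qpoch_inf z p = (\<Prod>k. 1 - z * p ^ k)"

definition qpi :: "real \<Rightarrow> real" where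
  "qpi q = (1 - q\<^sup>2) * q powr (1/4) * (qpoch_inf (q\<^sup>2) (q\<^sup>2))\<^sup>2 / (qpoch_inf q (q\<^sup>2))\<^sup>2"

end

theory Submission
  imports Defs
begin

text \<open>
  With \<open>c = q\<^bsup>2(l+1)\<^esup>\<close> the left-hand side is \<open>q\<^sup>2(1+q)/(1-q)\<close> times \<open>(1 - c) S(c)\<close>, where
  \<open>S(c) = \<Sum>\<^sub>m (q\<^sup>-\<^sup>1;q\<^sup>2)\<^sub>m\<^sup>2 / ((q\<^sup>2;q\<^sup>2)\<^sub>m (c;q\<^sup>2)\<^sub>m) (cq\<^sup>2)\<^sup>m\<close> is Heine's series
  \<open>\<^sub>2\<phi>\<^sub>1(q\<^sup>-\<^sup>1, q\<^sup>-\<^sup>1; c; q\<^sup>2, cq\<^sup>2)\<close>; its terms \<open>m = 0, 1\<close> are the two explicit summands.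
  Termwise telescoping gives the contiguous relation \<open>(1-c)(1-cq\<^sup>2) S(c) = (1-cq)\<^sup>2 S(cq\<^sup>2)\<close>, and
  \<open>S(c) \<rightarrow> 1\<close> as \<open>c \<rightarrow> 0\<close>. Iterating the relation and passing to the limit yields the
  q-Gauss sum \<open>S(c) = (cq;q\<^sup>2)\<^sub>\<infinity>\<^sup>2 / ((c;q\<^sup>2)\<^sub>\<infinity> (cq\<^sup>2;q\<^sup>2)\<^sub>\<infinity>)\<close>; splitting off the first \<open>l+1\<close>
  factors of the infinite products in \<open>\<pi>\<^sub>q\<close> then gives the right-hand side.
\<close>

definition qpoch :: "real \<Rightarrow> real \<Rightarrow> nat \<Rightarrow> real" where
  "qpoch z p n = (\<Prod>k<n. 1 - z * p ^ k)"

lemma qpoch_0 [simp]: "qpoch z p 0 = 1"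
  by (simp add: qpoch_def)

lemma qpoch_Suc: "qpoch z p (Suc n) = qpoch z p n * (1 - z * p ^ n)"
  by (simp add: qpoch_def)

lemma qpoch_Suc_shift: "qpoch z p (Suc n) = (1 - z) * qpoch (z * p) p n"
  unfolding qpoch_def prod.lessThan_Suc_shift by (simp add: mult.assoc)

lemma qpoch_add: "qpoch z p (m + n) = qpoch z p m * qpoch (z * p ^ m) p n"
  by (induction n) (simp_all add: qpoch_Suc power_add mult.assoc)

lemma qpoch_factor_bounds:
  fixes z p :: real
  assumes "0 \<le> z" "z < 1" "0 \<le> p" "p \<le> 1"
  shows "0 < 1 - z * p ^ k" "1 - z * p ^ k \<le> 1"
proof -
  have "z * p ^ k \<le> z"
    using assms by (simp add: mult_left_le power_le_one)
  then show "0 < 1 - z * p ^ k"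
    using assms by simp
  show "1 - z * p ^ k \<le> 1"
    using assms by simp
qed

lemma qpoch_pos:
  assumes "0 \<le> z" "z < 1" "0 \<le> p" "p \<le> 1"
  shows "0 < qpoch z p n"
  unfolding qpoch_def using qpoch_factor_bounds[OF assms] by (intro prod_pos) simp

lemma qpoch_le_one:
  assumes "0 \<le> z" "z < 1" "0 \<le> p" "p \<le> 1"
  shows "qpoch z p n \<le> 1"
  unfolding qpoch_def using qpoch_factor_bounds[OF assms] by (intro prod_le_1) (simp add: less_imp_le)

lemma qpoch_antimono:
  assumes "0 \<le> c" "c \<le> z" "z < 1" "0 \<le> p" "p \<le> 1"
  shows "qpoch z p n \<le> qpoch c p n"
  unfolding qpoch_def
proof (rule prod_mono)
  fix k
  have "c * p ^ k \<le> z * p ^ k"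
    using assms by (simp add: mult_right_mono)
  then show "0 \<le> 1 - z * p ^ k \<and> 1 - z * p ^ k \<le> 1 - c * p ^ k"
    using qpoch_factor_bounds[of z p k] assms by simp
qed

lemma convergent_prod_qpoch:
  fixes z p :: real
  assumes "0 \<le> z" "z < 1" "0 \<le> p" "p < 1"
  shows "convergent_prod (\<lambda>k. 1 - z * p ^ k)"
proof -
  have "summable (\<lambda>k. \<bar>- (z * p ^ k)\<bar>)"
    using assms by (simp add: abs_mult summable_geometric)
  moreover have "- (z * p ^ k) \<noteq> -1" for k
    using qpoch_factor_bounds[of z p k] assms by simp
  ultimately have "convergent_prod (\<lambda>k. 1 + - (z * p ^ k))"
    by (rule summable_imp_convergent_prod_real)
  then show ?thesis
    by simp
qed

lemma qpoch_inf_pos: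
  assumes "0 \<le> z" "z < 1" "0 \<le> p" "p < 1"
  shows "0 < qpoch_inf z p"
  unfolding qpoch_inf_def using qpoch_factor_bounds[of z p] assms
  by (intro less_0_prodinf convergent_prod_qpoch) auto

lemma qpoch_inf_le_qpoch:
  assumes "0 \<le> z" "z < 1" "0 \<le> p" "p < 1"
  shows "qpoch_inf z p \<le> qpoch z p n"
  unfolding qpoch_inf_def qpoch_def
  using qpoch_factor_bounds[of z p] assms convergent_prod_has_prod[OF convergent_prod_qpoch[OF assms]]
  by (intro prod_ge_prodinf) (auto simp: less_imp_le)

lemma qpoch_tendsto_qpoch_inf:
  assumes "0 \<le> z" "z < 1" "0 \<le> p" "p < 1"
  shows "qpoch z p \<longlonglongrightarrow> qpoch_inf z p"
proof -
  have "(\<lambda>n. \<Prod>k\<le>n. 1 - z * p ^ k) \<longlonglongrightarrow> qpoch_inf z p"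
    unfolding qpoch_inf_def by (rule convergent_prod_LIMSEQ[OF convergent_prod_qpoch[OF assms]])
  then have "(\<lambda>n. qpoch z p (Suc n)) \<longlonglongrightarrow> qpoch_inf z p"
    by (simp add: qpoch_def lessThan_Suc_atMost)
  then show ?thesis
    by (rule LIMSEQ_imp_Suc)
qed

lemma qpoch_inf_split:
  assumes "0 \<le> z" "z < 1" "0 \<le> p" "p < 1"
  shows "qpoch_inf z p = qpoch z p n * qpoch_inf (z * p ^ n) p"
proof -
  have "qpoch_inf z p = (\<Prod>k. 1 - z * p ^ (k + n)) * qpoch z p n"
    unfolding qpoch_inf_def qpoch_def using qpoch_factor_bounds[of z p] assms
    by (intro prodinf_split_initial_segment convergent_prod_qpoch) (auto simp: less_imp_neq[symmetric])
  then show ?thesis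
    by (simp add: qpoch_inf_def power_add mult_ac)
qed

lemma qnum_of_nat:
  assumes "0 < q"
  shows "qnum q (real n) = (1 - (q\<^sup>2) ^ n) / (1 - q\<^sup>2)"
proof -
  have "q powr (2 * real n) = q powr real (2 * n)"
    by simp
  also have "\<dots> = (q\<^sup>2) ^ n"
    using assms by (simp only: powr_realpow power_mult)
  finally have "q powr (2 * real n) = (q\<^sup>2) ^ n" .
  then show ?thesis unfolding qnum_def by simp
qed

lemma qnum_half_plus_nat:
  assumes "0 < q"
  shows "qnum q (1/2 + real n) = (1 - q * (q\<^sup>2) ^ n) / (1 - q\<^sup>2)"
proof -
  have "q powr (2 * (1/2 + real n)) = q powr real (Suc (2 * n))"
    by (simp add: algebra_simps)
  also have "\<dots> = q * (q\<^sup>2) ^ n"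
    using assms by (simp only: powr_realpow power_Suc power_mult)
  finally show ?thesis unfolding qnum_def by simp
qed

lemma qfact_eq_qpoch:
  assumes "0 < q"
  shows "qfact q n = qpoch (q\<^sup>2) (q\<^sup>2) n / (1 - q\<^sup>2) ^ n"
proof (induction n)
  case (Suc n)
  have "qfact q (Suc n) = qfact q n * qnum q (real (Suc n))"
    unfolding qfact_def by (simp add: prod.nat_ivl_Suc' mult.commute del: of_nat_Suc)
  also have "\<dots> = qpoch (q\<^sup>2) (q\<^sup>2) (Suc n) / (1 - q\<^sup>2) ^ Suc n"
    unfolding Suc qnum_of_nat[OF assms] by (simp add: qpoch_Suc mult.commute)
  finally show ?case .
qed (simp add: qfact_def)

lemma qhalf_poch_eq_qpoch:
  assumes "0 < q"
  shows "qhalf_poch q n = qpoch q (q\<^sup>2) n / (1 - q\<^sup>2) ^ n"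
  using assms
  by (induction n) (simp_all add: qhalf_poch_def qnum_half_plus_nat qpoch_Suc mult.commute)

definition qgauss_term :: "real \<Rightarrow> real \<Rightarrow> nat \<Rightarrow> real" where
  "qgauss_term q c m =
     (qpoch (1/q) (q\<^sup>2) m)\<^sup>2 / (qpoch (q\<^sup>2) (q\<^sup>2) m * qpoch c (q\<^sup>2) m) * (c * q\<^sup>2) ^ m"

definition qgauss_sum :: "real \<Rightarrow> real \<Rightarrow> real" where
  "qgauss_sum q c = (\<Sum>m. qgauss_term q c m)"

lemma qgauss_term_0 [simp]: "qgauss_term q c 0 = 1"
  by (simp add: qgauss_term_def)

lemma abs_qpoch_inverse_le:
  assumes "0 < q" "q < 1"
  shows "\<bar>qpoch (1/q) (q\<^sup>2) m\<bar> \<le> 1/q"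
proof (cases m)
  case 0
  then show ?thesis using assms by simp
next
  case (Suc n)
  have "qpoch (1/q) (q\<^sup>2) m = (1 - 1/q) * qpoch q (q\<^sup>2) n"
    unfolding Suc qpoch_Suc_shift using assms by (simp add: power2_eq_square)
  moreover have "0 \<le> qpoch q (q\<^sup>2) n" "qpoch q (q\<^sup>2) n \<le> 1"
    using assms qpoch_pos[of q "q\<^sup>2" n] qpoch_le_one[of q "q\<^sup>2" n]
    by (auto simp: power_le_one)
  moreover have "\<bar>1 - 1/q\<bar> \<le> 1/q"
    using assms by simp
  ultimately show ?thesis
    by (simp add: abs_mult) (metis abs_ge_zero mult_left_le order.trans)
qed

lemma qgauss_parameter_bounds:
  fixes q c :: real
  assumes "0 < q" "q < 1" "0 \<le> c" "c \<le> q\<^sup>2"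
  shows "q\<^sup>2 < 1" "c < 1" "c * q < 1" "0 \<le> c * q\<^sup>2" "c * q\<^sup>2 \<le> q\<^sup>2" "c * q\<^sup>2 < 1"
proof -
  show q2: "q\<^sup>2 < 1" using assms by (simp add: power_less_one_iff)
  then show c: "c < 1" using assms by simp
  show "c * q < 1" using c assms mult_left_le[of q c] by simp
  show "0 \<le> c * q\<^sup>2" "c * q\<^sup>2 \<le> q\<^sup>2"
    using assms q2 mult_left_le_one_le[of "q\<^sup>2" c] by auto
  then show "c * q\<^sup>2 < 1" using q2 by simp
qed

lemma qgauss_parameter_scale:
  fixes q c :: real
  assumes "0 < q" "q < 1" "0 \<le> c" "c \<le> q\<^sup>2"
  shows "0 \<le> c * (q\<^sup>2) ^ N" "c * (q\<^sup>2) ^ N \<le> q\<^sup>2"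
  using assms mult_left_le[of "(q\<^sup>2) ^ N" c] by (auto simp: power_le_one)

lemma abs_qgauss_term_le:
  assumes q: "0 < q" "q < 1" and c: "0 \<le> c" "c \<le> q\<^sup>2"
  shows "\<bar>qgauss_term q c m\<bar> \<le> (c * q\<^sup>2) ^ m / (q * qpoch_inf (q\<^sup>2) (q\<^sup>2))\<^sup>2"
proof -
  have p: "0 \<le> q\<^sup>2" "q\<^sup>2 < 1" using q by (auto simp: power_less_one_iff)
  define P where "P = qpoch_inf (q\<^sup>2) (q\<^sup>2)"
  have P: "0 < P" "P \<le> qpoch (q\<^sup>2) (q\<^sup>2) m"
    unfolding P_def using p by (auto intro: qpoch_inf_pos qpoch_inf_le_qpoch)
  have "qpoch (q\<^sup>2) (q\<^sup>2) m \<le> qpoch c (q\<^sup>2) m"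
    using p c by (intro qpoch_antimono) auto
  then have "P * P \<le> qpoch (q\<^sup>2) (q\<^sup>2) m * qpoch c (q\<^sup>2) m"
    using P by (intro mult_mono) auto
  then have den: "P\<^sup>2 \<le> qpoch (q\<^sup>2) (q\<^sup>2) m * qpoch c (q\<^sup>2) m"
    by (simp add: power2_eq_square)
  have num: "(qpoch (1/q) (q\<^sup>2) m)\<^sup>2 \<le> (1/q)\<^sup>2"
    using power_mono[OF abs_qpoch_inverse_le[OF q, of m] abs_ge_zero, of 2] by simp
  have "(qpoch (1/q) (q\<^sup>2) m)\<^sup>2 / (qpoch (q\<^sup>2) (q\<^sup>2) m * qpoch c (q\<^sup>2) m) \<le> (1/q)\<^sup>2 / P\<^sup>2"
    using num den P by (intro frac_le) auto
  then have "qgauss_term q c m \<le> (1/q)\<^sup>2 / P\<^sup>2 * (c * q\<^sup>2) ^ m"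
    unfolding qgauss_term_def using c by (intro mult_right_mono) auto
  moreover have "0 < qpoch (q\<^sup>2) (q\<^sup>2) m * qpoch c (q\<^sup>2) m"
    using den P(1) by (meson less_le_trans zero_less_power)
  then have "0 \<le> qgauss_term q c m"
    unfolding qgauss_term_def using c by (intro mult_nonneg_nonneg divide_nonneg_pos) auto
  ultimately show ?thesis
    unfolding P_def by (simp add: power_divide power_mult_distrib field_simps)
qed

lemma summable_qgauss_term:
  assumes q: "0 < q" "q < 1" and c: "0 \<le> c" "c \<le> q\<^sup>2"
  shows "summable (qgauss_term q c)"
proof (rule summable_comparison_test')
  have "c * q\<^sup>2 < 1"
    using qgauss_parameter_bounds[OF q c] by simp
  then show "summable (\<lambda>m. (c * q\<^sup>2) ^ m / (q * qpoch_inf (q\<^sup>2) (q\<^sup>2))\<^sup>2)"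
    using c by (intro summable_divide summable_geometric) simp
  show "norm (qgauss_term q c m) \<le> (c * q\<^sup>2) ^ m / (q * qpoch_inf (q\<^sup>2) (q\<^sup>2))\<^sup>2" for m
    using abs_qgauss_term_le[OF q c] by simp
qed

lemma abs_qgauss_sum_minus_one_le:
  assumes q: "0 < q" "q < 1" and c: "0 \<le> c" "c \<le> q\<^sup>2"
  shows "\<bar>qgauss_sum q c - 1\<bar> \<le> c * q\<^sup>2 / (1 - c * q\<^sup>2) / (q * qpoch_inf (q\<^sup>2) (q\<^sup>2))\<^sup>2"
proof -
  define x where "x = c * q\<^sup>2"
  define B where "B = (q * qpoch_inf (q\<^sup>2) (q\<^sup>2))\<^sup>2"
  have x: "0 \<le> x" "x < 1"
    unfolding x_def using qgauss_parameter_bounds[OF q c] by auto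
  have "(\<lambda>m. x * x ^ m / B) sums (x * (1 / (1 - x)) / B)"
    using x by (intro sums_divide sums_mult geometric_sums) simp
  then have geom: "(\<lambda>m. x ^ Suc m / B) sums (x / (1 - x) / B)"
    by simp
  have "qgauss_sum q c - 1 = (\<Sum>m. qgauss_term q c (Suc m))"
    unfolding qgauss_sum_def using suminf_split_head[OF summable_qgauss_term[OF q c]] by simp
  also have "norm \<dots> \<le> (\<Sum>m. x ^ Suc m / B)"
  proof (rule norm_suminf_le)
    show "norm (qgauss_term q c (Suc m)) \<le> x ^ Suc m / B" for m
      using abs_qgauss_term_le[OF q c, of "Suc m"] unfolding x_def B_def by simp
  qed (rule sums_summable[OF geom])
  also have "\<dots> = x / (1 - x) / B"
    using geom by (rule sums_unique[symmetric])
  finally show ?thesis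
    unfolding x_def B_def by simp
qed

lemma qgauss_sum_tendsto_one:
  assumes q: "0 < q" "q < 1" and c: "\<And>N. 0 \<le> c N" "\<And>N. c N \<le> q\<^sup>2" and "c \<longlonglongrightarrow> 0"
  shows "(\<lambda>N. qgauss_sum q (c N)) \<longlonglongrightarrow> 1"
proof -
  let ?B = "(q * qpoch_inf (q\<^sup>2) (q\<^sup>2))\<^sup>2"
  have "q\<^sup>2 < 1"
    using q by (simp add: power_less_one_iff)
  then have "0 < qpoch_inf (q\<^sup>2) (q\<^sup>2)"
    by (intro qpoch_inf_pos) auto
  then have "(\<lambda>N. c N * q\<^sup>2 / (1 - c N * q\<^sup>2) / ?B) \<longlonglongrightarrow> 0 * q\<^sup>2 / (1 - 0 * q\<^sup>2) / ?B"
    using q by (intro tendsto_divide tendsto_mult tendsto_diff tendsto_const assms(5)) simp_all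
  then have bound_lim: "(\<lambda>N. c N * q\<^sup>2 / (1 - c N * q\<^sup>2) / ?B) \<longlonglongrightarrow> 0"
    by simp
  have bound: "\<forall>N. norm (qgauss_sum q (c N) - 1) \<le> c N * q\<^sup>2 / (1 - c N * q\<^sup>2) / ?B"
    using abs_qgauss_sum_minus_one_le[OF q c] by simp
  have "(\<lambda>N. qgauss_sum q (c N) - 1) \<longlonglongrightarrow> 0"
    by (rule Lim_null_comparison[OF always_eventually[OF bound] bound_lim])
  then show ?thesis
    by (simp add: LIM_zero_iff)
qed

lemma qgauss_term_Suc:
  "qgauss_term q c (Suc m) =
     qgauss_term q c m * ((1 - (q\<^sup>2) ^ m / q)\<^sup>2 * (c * q\<^sup>2) / ((1 - (q\<^sup>2) ^ Suc m) * (1 - c * (q\<^sup>2) ^ m)))"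
  by (simp add: qgauss_term_def qpoch_Suc power_mult_distrib mult_ac)

lemma qgauss_term_scale:
  assumes q: "0 < q" "q < 1" and c: "0 \<le> c" "c \<le> q\<^sup>2"
  shows "qgauss_term q (c * q\<^sup>2) m * (1 - c * (q\<^sup>2) ^ m) = (1 - c) * (q\<^sup>2) ^ m * qgauss_term q c m"
proof -
  note bounds = qgauss_parameter_bounds[OF q c]
  have ratio: "K / (B * C') * (X * P) * e = d * P * (K / (B * C) * X)"
    if "C' * d = C * e" "B \<noteq> 0" "C \<noteq> 0" "C' \<noteq> 0" for K B C C' X P d e :: real
    using that by (simp add: field_simps)
  have "qpoch (c * q\<^sup>2) (q\<^sup>2) m * (1 - c) = qpoch c (q\<^sup>2) m * (1 - c * (q\<^sup>2) ^ m)"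
    using qpoch_Suc[of c "q\<^sup>2" m] qpoch_Suc_shift[of c "q\<^sup>2" m] by (simp add: mult.commute)
  moreover have "0 < qpoch c (q\<^sup>2) m" "0 < qpoch (q\<^sup>2) (q\<^sup>2) m" "0 < qpoch (c * q\<^sup>2) (q\<^sup>2) m"
    using bounds c by (auto intro: qpoch_pos)
  ultimately show ?thesis
    unfolding qgauss_term_def power_mult_distrib[of "c * q\<^sup>2" "q\<^sup>2"] by (intro ratio) auto
qed

lemma qgauss_term_contiguous:
  assumes q: "0 < q" "q < 1" and c: "0 \<le> c" "c \<le> q\<^sup>2"
  shows "(1 - c) * (1 - c * q\<^sup>2) * qgauss_term q c m - (1 - c * q)\<^sup>2 * qgauss_term q (c * q\<^sup>2) m
    = (1 - c) * (qgauss_term q c m * (1 - (q\<^sup>2) ^ m) - qgauss_term q c (Suc m) * (1 - (q\<^sup>2) ^ Suc m))"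
proof -
  note bounds = qgauss_parameter_bounds[OF q c]
  define u where "u = qgauss_term q c m"
  define P where "P = (q\<^sup>2) ^ m"
  have P: "0 \<le> P" "P \<le> 1"
    unfolding P_def using bounds by (auto simp: power_le_one)
  then have "c * P < 1" "q\<^sup>2 * P < 1"
    using bounds c mult_left_le[of P c] mult_left_le[of P "q\<^sup>2"] by auto
  then have nonzero: "1 - c * P \<noteq> 0" "1 - q\<^sup>2 * P \<noteq> 0"
    by auto
  have shifted: "qgauss_term q (c * q\<^sup>2) m = (1 - c) * P * u / (1 - c * P)"
    using qgauss_term_scale[OF q c, of m] nonzero unfolding u_def P_def
    by (simp add: nonzero_eq_divide_eq)
  have "(q\<^sup>2) ^ Suc m = q\<^sup>2 * P"
    unfolding P_def by simp
  then have "qgauss_term q c (Suc m) * (1 - (q\<^sup>2) ^ Suc m)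
      = u * (1 - P / q)\<^sup>2 * (c * q\<^sup>2) / ((1 - q\<^sup>2 * P) * (1 - c * P)) * (1 - q\<^sup>2 * P)"
    unfolding qgauss_term_Suc u_def P_def by simp
  also have "\<dots> = u * ((1 - P / q)\<^sup>2 * (c * q\<^sup>2)) / (1 - c * P)"
    using nonzero(2) by simp
  also have "(1 - P / q)\<^sup>2 * (c * q\<^sup>2) = c * (q - P)\<^sup>2"
    using q by (simp add: power2_eq_square field_simps)
  finally have succ: "qgauss_term q c (Suc m) * (1 - (q\<^sup>2) ^ Suc m) = u * (c * (q - P)\<^sup>2) / (1 - c * P)" .
  have "(1 - c) * (1 - c * q\<^sup>2) * u - (1 - c * q)\<^sup>2 * ((1 - c) * P * u / (1 - c * P))
      = (1 - c) * u * (((1 - c * q\<^sup>2) * (1 - c * P) - (1 - c * q)\<^sup>2 * P) / (1 - c * P))"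
    using nonzero by (simp add: field_simps)
  also have "(1 - c * q\<^sup>2) * (1 - c * P) - (1 - c * q)\<^sup>2 * P = (1 - P) * (1 - c * P) - c * (q - P)\<^sup>2"
    by (simp add: power2_eq_square algebra_simps)
  also have "(1 - c) * u * (((1 - P) * (1 - c * P) - c * (q - P)\<^sup>2) / (1 - c * P))
      = (1 - c) * (u * (1 - P) - u * (c * (q - P)\<^sup>2) / (1 - c * P))"
    using nonzero by (simp add: field_simps)
  finally show ?thesis
    unfolding shifted succ u_def[symmetric] P_def[symmetric] .
qed

lemma qgauss_sum_contiguous:
  assumes q: "0 < q" "q < 1" and c: "0 \<le> c" "c \<le> q\<^sup>2"
  shows "(1 - c) * (1 - c * q\<^sup>2) * qgauss_sum q c = (1 - c * q)\<^sup>2 * qgauss_sum q (c * q\<^sup>2)"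
proof -
  note bounds = qgauss_parameter_bounds[OF q c]
  have summable: "summable (qgauss_term q c)" "summable (qgauss_term q (c * q\<^sup>2))"
    using bounds by (auto intro: summable_qgauss_term q c)
  define W where "W m = qgauss_term q c m * (1 - (q\<^sup>2) ^ m)" for m
  have "W \<longlonglongrightarrow> 0 * (1 - 0)"
    unfolding W_def using bounds
    by (intro tendsto_mult tendsto_diff summable_LIMSEQ_zero summable tendsto_const LIMSEQ_power_zero) auto
  then have "(\<lambda>m. W m - W (Suc m)) sums (W 0 - 0)"
    by (intro telescope_sums') simp
  then have "(\<lambda>m. (1 - c) * (W m - W (Suc m))) sums 0"
    using sums_mult[of _ _ "1 - c"] by (fastforce simp: W_def)
  then have "(\<lambda>m. (1 - c) * (1 - c * q\<^sup>2) * qgauss_term q c m - (1 - c * q)\<^sup>2 * qgauss_term q (c * q\<^sup>2) m) sums 0"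
    unfolding W_def by (simp add: qgauss_term_contiguous[OF q c])
  moreover have "(\<lambda>m. (1 - c) * (1 - c * q\<^sup>2) * qgauss_term q c m - (1 - c * q)\<^sup>2 * qgauss_term q (c * q\<^sup>2) m)
      sums ((1 - c) * (1 - c * q\<^sup>2) * qgauss_sum q c - (1 - c * q)\<^sup>2 * qgauss_sum q (c * q\<^sup>2))"
    unfolding qgauss_sum_def by (intro sums_diff sums_mult summable_sums summable)
  ultimately show ?thesis
    using sums_unique2 by fastforce
qed

lemma qgauss_sum_iterate:
  assumes q: "0 < q" "q < 1" and c: "0 \<le> c" "c \<le> q\<^sup>2"
  shows "qpoch c (q\<^sup>2) N * qpoch (c * q\<^sup>2) (q\<^sup>2) N * qgauss_sum q c
    = (qpoch (c * q) (q\<^sup>2) N)\<^sup>2 * qgauss_sum q (c * (q\<^sup>2) ^ N)"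
proof (induction N)
  case (Suc N)
  define c' where "c' = c * (q\<^sup>2) ^ N"
  have c': "0 \<le> c'" "c' \<le> q\<^sup>2"
    unfolding c'_def using qgauss_parameter_scale[OF q c] by auto
  have "qpoch c (q\<^sup>2) (Suc N) * qpoch (c * q\<^sup>2) (q\<^sup>2) (Suc N) * qgauss_sum q c
      = qpoch c (q\<^sup>2) N * qpoch (c * q\<^sup>2) (q\<^sup>2) N * qgauss_sum q c * ((1 - c') * (1 - c' * q\<^sup>2))"
    unfolding qpoch_Suc c'_def by (simp add: mult_ac)
  also have "\<dots> = (qpoch (c * q) (q\<^sup>2) N)\<^sup>2 * ((1 - c') * (1 - c' * q\<^sup>2) * qgauss_sum q c')"
    unfolding Suc c'_def by (simp add: mult_ac)
  also have "\<dots> = (qpoch (c * q) (q\<^sup>2) N)\<^sup>2 * (1 - c' * q)\<^sup>2 * qgauss_sum q (c' * q\<^sup>2)"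
    unfolding qgauss_sum_contiguous[OF q c'] by simp
  also have "\<dots> = (qpoch (c * q) (q\<^sup>2) (Suc N))\<^sup>2 * qgauss_sum q (c * (q\<^sup>2) ^ Suc N)"
    unfolding qpoch_Suc c'_def by (simp add: power_mult_distrib mult_ac)
  finally show ?case .
qed simp

theorem qgauss_sum_eq:
  assumes q: "0 < q" "q < 1" and c: "0 \<le> c" "c \<le> q\<^sup>2"
  shows "qgauss_sum q c = (qpoch_inf (c * q) (q\<^sup>2))\<^sup>2 / (qpoch_inf c (q\<^sup>2) * qpoch_inf (c * q\<^sup>2) (q\<^sup>2))"
proof -
  note bounds = qgauss_parameter_bounds[OF q c]
  have p: "0 \<le> q\<^sup>2" "q\<^sup>2 < 1"
    using bounds by auto
  have "(\<lambda>N. c * (q\<^sup>2) ^ N) \<longlonglongrightarrow> c * 0"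
    using p by (intro tendsto_mult tendsto_const LIMSEQ_power_zero) auto
  then have "(\<lambda>N. (qpoch (c * q) (q\<^sup>2) N)\<^sup>2 * qgauss_sum q (c * (q\<^sup>2) ^ N))
      \<longlonglongrightarrow> (qpoch_inf (c * q) (q\<^sup>2))\<^sup>2 * 1"
    using bounds q c p
    by (intro tendsto_mult tendsto_power qpoch_tendsto_qpoch_inf qgauss_sum_tendsto_one qgauss_parameter_scale) auto
  moreover have "(\<lambda>N. qpoch c (q\<^sup>2) N * qpoch (c * q\<^sup>2) (q\<^sup>2) N * qgauss_sum q c)
      \<longlonglongrightarrow> qpoch_inf c (q\<^sup>2) * qpoch_inf (c * q\<^sup>2) (q\<^sup>2) * qgauss_sum q c"
    using bounds c p by (intro tendsto_mult tendsto_const qpoch_tendsto_qpoch_inf) auto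
  ultimately have "qpoch_inf c (q\<^sup>2) * qpoch_inf (c * q\<^sup>2) (q\<^sup>2) * qgauss_sum q c
      = (qpoch_inf (c * q) (q\<^sup>2))\<^sup>2"
    unfolding qgauss_sum_iterate[OF q c] using LIMSEQ_unique by fastforce
  moreover have "0 < qpoch_inf c (q\<^sup>2)" "0 < qpoch_inf (c * q\<^sup>2) (q\<^sup>2)"
    using bounds c p by (auto intro: qpoch_inf_pos)
  ultimately show ?thesis
    by (simp add: field_simps)
qed

lemma qgauss_coefficient:
  fixes q :: real
  assumes "0 < q" "q < 1"
  shows "q\<^sup>2 * (1 + q) / (1 - q) * (1 - 1/q)\<^sup>2 = 1 - q\<^sup>2"
proof -
  have "1 - q \<noteq> 0" "q \<noteq> 0"
    using assms by auto
  then have "q\<^sup>2 * (1 + q) / (1 - q) * (1 - 1/q)\<^sup>2 = (1 - q) * (1 + q)"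
    by (simp add: power2_eq_square field_simps)
  then show ?thesis
    by (simp add: power2_eq_square algebra_simps)
qed

lemma series_term_eq_qgauss_term:
  assumes q: "0 < q" "q < 1"
  shows "qfact q (l + 1) * ((qhalf_poch q n)\<^sup>2 / (qfact q (n + 1) * qfact q (l + n + 1)) * q ^ (2 * (l + 2) * (n + 1)))
    = q\<^sup>2 * (1 + q) / (1 - q) * (1 - (q\<^sup>2) ^ (l + 1)) * qgauss_term q ((q\<^sup>2) ^ (l + 1)) (n + 1)"
proof -
  have bounds: "0 \<le> q\<^sup>2" "q\<^sup>2 < 1"
    using q by (simp_all add: power_less_one_iff)
  define c where "c = (q\<^sup>2) ^ (l + 1)"
  define E where "E = 1 - q\<^sup>2"
  have c: "0 \<le> c" "c < 1"
    unfolding c_def using bounds q power_Suc_less_one[of "q\<^sup>2" l] by auto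
  have "E \<noteq> 0"
    unfolding E_def using bounds by simp
  have qfact_l: "qfact q (l + 1) = qpoch (q\<^sup>2) (q\<^sup>2) l * (1 - c) / (E ^ l * E)"
    unfolding qfact_eq_qpoch[OF q(1)] E_def c_def by (simp add: qpoch_Suc mult.commute)
  have qfact_n: "qfact q (n + 1) = qpoch (q\<^sup>2) (q\<^sup>2) (n + 1) / (E ^ n * E)"
    unfolding qfact_eq_qpoch[OF q(1)] E_def by (simp add: mult.commute)
  have qfact_ln: "qfact q (l + n + 1) = qpoch (q\<^sup>2) (q\<^sup>2) l * qpoch c (q\<^sup>2) (n + 1) / (E ^ l * (E ^ n * E))"
    unfolding qfact_eq_qpoch[OF q(1)] E_def c_def
    by (simp add: qpoch_add[of _ _ l "n + 1", simplified] power_add mult_ac)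
  have qhalf: "qhalf_poch q n = qpoch q (q\<^sup>2) n / E ^ n"
    unfolding qhalf_poch_eq_qpoch[OF q(1)] E_def ..
  have inverse: "qpoch (1/q) (q\<^sup>2) (n + 1) = (1 - 1/q) * qpoch q (q\<^sup>2) n"
    using q by (simp add: qpoch_Suc_shift power2_eq_square)
  have "c * q\<^sup>2 = q ^ (2 * (l + 2))"
    unfolding c_def power_mult by simp
  then have power: "q ^ (2 * (l + 2) * (n + 1)) = (c * q\<^sup>2) ^ (n + 1)"
    by (simp only: power_mult)
  have cancel: "B * (1 - c) / (El * E) * ((A / En)\<^sup>2 / (D / (En * E) * (B * C / (El * (En * E)))) * Y)
      = E * (1 - c) * (A\<^sup>2 / (D * C) * Y)"
    if "El \<noteq> 0" "En \<noteq> 0" "E \<noteq> 0" "B \<noteq> 0" "C \<noteq> 0" "D \<noteq> 0" for A B C D El En Y :: real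
    using that by (simp add: field_simps power2_eq_square)
  have "0 < qpoch (q\<^sup>2) (q\<^sup>2) l" "0 < qpoch (q\<^sup>2) (q\<^sup>2) (n + 1)" "0 < qpoch c (q\<^sup>2) (n + 1)"
    using bounds c by (auto intro: qpoch_pos)
  then have "qfact q (l + 1) * ((qhalf_poch q n)\<^sup>2 / (qfact q (n + 1) * qfact q (l + n + 1)) * q ^ (2 * (l + 2) * (n + 1)))
      = E * (1 - c) * ((qpoch q (q\<^sup>2) n)\<^sup>2 / (qpoch (q\<^sup>2) (q\<^sup>2) (n + 1) * qpoch c (q\<^sup>2) (n + 1)) * (c * q\<^sup>2) ^ (n + 1))"
    unfolding qfact_l qfact_n qfact_ln qhalf power using \<open>E \<noteq> 0\<close> by (intro cancel) auto
  also have "\<dots> = q\<^sup>2 * (1 + q) / (1 - q) * (1 - c) * qgauss_term q c (n + 1)"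
    unfolding qgauss_term_def inverse qgauss_coefficient[OF q, symmetric] E_def by (simp add: power_mult_distrib mult_ac)
  finally show ?thesis
    unfolding c_def .
qed

lemma series_eq_qgauss_sum:
  assumes q: "0 < q" "q < 1"
  shows "q\<^sup>2 * (1 + q)\<^sup>2 * qnum q (real (l + 1)) + q ^ (2 * l + 4)
      + qfact q (l + 1) *
        (\<Sum>m. (let n = Suc m in
           (qhalf_poch q n)\<^sup>2 / (qfact q (n + 1) * qfact q (l + n + 1))
             * q ^ (2 * (l + 2) * (n + 1))))
    = q\<^sup>2 * (1 + q) / (1 - q) * ((1 - (q\<^sup>2) ^ (l + 1)) * qgauss_sum q ((q\<^sup>2) ^ (l + 1)))"
proof -
  have bounds: "0 \<le> q\<^sup>2" "q\<^sup>2 < 1"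
    using q by (simp_all add: power_less_one_iff)
  define c where "c = (q\<^sup>2) ^ (l + 1)"
  define K where "K = q\<^sup>2 * (1 + q) / (1 - q)"
  define F where "F = qfact q (l + 1)"
  have c: "0 \<le> c" "c \<le> q\<^sup>2"
    unfolding c_def using qgauss_parameter_scale[OF q zero_le_power2 order.refl, of l] by simp_all
  have "c < 1"
    using c bounds by simp
  have "0 < qpoch (q\<^sup>2) (q\<^sup>2) (l + 1)"
    using bounds by (intro qpoch_pos) auto
  then have "0 < F"
    unfolding F_def qfact_eq_qpoch[OF q(1)] using bounds by simp
  have scaled: "F * (let n = Suc m in
         (qhalf_poch q n)\<^sup>2 / (qfact q (n + 1) * qfact q (l + n + 1)) * q ^ (2 * (l + 2) * (n + 1)))
      = K * (1 - c) * qgauss_term q c (m + 2)" for m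
    using series_term_eq_qgauss_term[OF q, of l "Suc m"] unfolding Let_def K_def c_def F_def by simp
  have series: "(let n = Suc m in
         (qhalf_poch q n)\<^sup>2 / (qfact q (n + 1) * qfact q (l + n + 1)) * q ^ (2 * (l + 2) * (n + 1)))
      = K * (1 - c) / F * qgauss_term q c (m + 2)" for m
  proof -
    have "T = Z / F * u" if "F * T = Z * u" for T Z u :: real
      using that \<open>0 < F\<close> by (simp add: field_simps)
    then show ?thesis
      using scaled[of m] by blast
  qed
  have summable: "summable (\<lambda>m. qgauss_term q c (m + 2))"
    using summable_qgauss_term[OF q c] by (subst summable_iff_shift)
  have "F * (\<Sum>m. (let n = Suc m in
         (qhalf_poch q n)\<^sup>2 / (qfact q (n + 1) * qfact q (l + n + 1)) * q ^ (2 * (l + 2) * (n + 1))))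
      = K * (1 - c) * (\<Sum>m. qgauss_term q c (m + 2))"
    unfolding series suminf_mult[OF summable] using \<open>0 < F\<close> by simp
  also have "(\<Sum>m. qgauss_term q c (m + 2)) = qgauss_sum q c - (1 + qgauss_term q c 1)"
    using suminf_split_initial_segment[OF summable_qgauss_term[OF q c], of 2]
    unfolding qgauss_sum_def by (simp add: numeral_2_eq_2)
  finally have tail: "F * (\<Sum>m. (let n = Suc m in
         (qhalf_poch q n)\<^sup>2 / (qfact q (n + 1) * qfact q (l + n + 1)) * q ^ (2 * (l + 2) * (n + 1))))
      = K * (1 - c) * (qgauss_sum q c - (1 + qgauss_term q c 1))" .
  have first_term: "K * (1 - c) * qgauss_term q c 1 = c * q\<^sup>2"
  proof -
    have term1: "qgauss_term q c 1 = (1 - 1/q)\<^sup>2 * (c * q\<^sup>2) / ((1 - q\<^sup>2) * (1 - c))"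
      unfolding qgauss_term_def by (simp add: qpoch_Suc)
    have cancel: "K * d * (X * Y / (E * d)) = Y" if "K * X = E" "E \<noteq> 0" "d \<noteq> 0" for X Y E d :: real
      using that by (simp add: field_simps)
    show ?thesis
      unfolding term1 using bounds \<open>c < 1\<close> by (intro cancel[OF qgauss_coefficient[OF q, folded K_def]]) auto
  qed
  have qnum: "q\<^sup>2 * (1 + q)\<^sup>2 * qnum q (real (l + 1)) = K * (1 - c)"
    unfolding qnum_of_nat[OF q(1)] K_def c_def using bounds q
    by (simp add: power2_eq_square field_simps)
  have "2 * l + 4 = 2 * (l + 2)"
    by simp
  then have "q ^ (2 * l + 4) = (q\<^sup>2) ^ (l + 2)"
    by (simp only: power_mult)
  then have power: "q ^ (2 * l + 4) = c * q\<^sup>2"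
    unfolding c_def by simp
  have "K * (1 - c) + c * q\<^sup>2 + K * (1 - c) * (qgauss_sum q c - (1 + qgauss_term q c 1))
      = K * (1 - c) * qgauss_sum q c + (c * q\<^sup>2 - K * (1 - c) * qgauss_term q c 1)"
    by (simp add: algebra_simps)
  then show ?thesis
    unfolding qnum power F_def[symmetric] tail c_def[symmetric] K_def[symmetric] first_term
    by simp
qed

lemma qgauss_sum_at_even_power:
  assumes q: "0 < q" "q < 1"
  shows "(1 - (q\<^sup>2) ^ (l + 1)) * qgauss_sum q ((q\<^sup>2) ^ (l + 1))
    = (qpoch_inf q (q\<^sup>2) / qpoch_inf (q\<^sup>2) (q\<^sup>2))\<^sup>2 * (qpoch (q\<^sup>2) (q\<^sup>2) (l + 1) / qpoch q (q\<^sup>2) (l + 1))\<^sup>2"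
proof -
  have p: "0 \<le> q\<^sup>2" "q\<^sup>2 < 1"
    using q by (simp_all add: power_less_one_iff)
  define c where "c = (q\<^sup>2) ^ (l + 1)"
  have c: "0 \<le> c" "c \<le> q\<^sup>2"
    unfolding c_def using qgauss_parameter_scale[OF q zero_le_power2 order.refl, of l] by simp_all
  note bounds = qgauss_parameter_bounds[OF q c]
  define A where "A = qpoch_inf (c * q) (q\<^sup>2)"
  define B where "B = qpoch_inf (c * q\<^sup>2) (q\<^sup>2)"
  have "0 < A" "0 < B"
    unfolding A_def B_def using bounds q c by (auto intro: qpoch_inf_pos)
  have "qpoch_inf c (q\<^sup>2) = (1 - c) * B"
    unfolding B_def using qpoch_inf_split[of c "q\<^sup>2" 1] bounds c by (simp add: qpoch_Suc)
  then have "(1 - c) * qgauss_sum q c = (A / B)\<^sup>2"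
    unfolding qgauss_sum_eq[OF q c] A_def[symmetric] B_def[symmetric]
    using bounds \<open>0 < B\<close> by (simp add: power2_eq_square)
  moreover have "qpoch_inf q (q\<^sup>2) = qpoch q (q\<^sup>2) (l + 1) * A"
    unfolding A_def c_def using qpoch_inf_split[of q "q\<^sup>2" "l + 1"] p q by (simp add: mult.commute)
  moreover have "qpoch_inf (q\<^sup>2) (q\<^sup>2) = qpoch (q\<^sup>2) (q\<^sup>2) (l + 1) * B"
    unfolding B_def c_def using qpoch_inf_split[of "q\<^sup>2" "q\<^sup>2" "l + 1"] p by (simp add: mult.commute)
  moreover have "0 < qpoch q (q\<^sup>2) (l + 1)" "0 < qpoch (q\<^sup>2) (q\<^sup>2) (l + 1)"
    using p q by (auto intro: qpoch_pos)
  moreover have "(A / B)\<^sup>2 = (Al * A / (Bl * B))\<^sup>2 * (Bl / Al)\<^sup>2" if "Al \<noteq> 0" "Bl \<noteq> 0" for Al Bl :: real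
    using that by (simp add: power2_eq_square field_simps)
  ultimately show ?thesis
    unfolding c_def[symmetric] by simp
qed

lemma qpi_expression_eq:
  assumes q: "0 < q" "q < 1"
  shows "(1 + q)\<^sup>2 * (qfact q (l + 1))\<^sup>2 / (qpi q * (qhalf_poch q (l + 1))\<^sup>2) * q powr (9/4)
    = q\<^sup>2 * (1 + q) / (1 - q)
      * ((qpoch_inf q (q\<^sup>2) / qpoch_inf (q\<^sup>2) (q\<^sup>2))\<^sup>2 * (qpoch (q\<^sup>2) (q\<^sup>2) (l + 1) / qpoch q (q\<^sup>2) (l + 1))\<^sup>2)"
proof -
  have p: "0 \<le> q\<^sup>2" "q\<^sup>2 < 1"
    using q by (simp_all add: power_less_one_iff)
  have "q powr (9/4) = q powr (1/4 + 2)"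
    by simp
  also have "\<dots> = q powr (1/4) * q\<^sup>2"
    unfolding powr_add using q by simp
  finally have powr: "q powr (9/4) = q powr (1/4) * q\<^sup>2" .
  have cancel: "(1 + q)\<^sup>2 * (B / G)\<^sup>2 / ((E * r * P\<^sup>2 / Q\<^sup>2) * (A / G)\<^sup>2) * (r * q\<^sup>2)
      = (1 + q)\<^sup>2 / E * q\<^sup>2 * ((Q / P)\<^sup>2 * (B / A)\<^sup>2)"
    if "E \<noteq> 0" "r \<noteq> 0" "G \<noteq> 0" "P \<noteq> 0" "Q \<noteq> 0" "A \<noteq> 0" for A B E G P Q r :: real
    using that by (simp add: power2_eq_square field_simps)
  have "1 - q\<^sup>2 = (1 - q) * (1 + q)"
    by (simp add: power2_eq_square algebra_simps)
  then have "(1 + q)\<^sup>2 / (1 - q\<^sup>2) = (1 + q) / (1 - q)"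
    using q by (simp add: power2_eq_square)
  moreover have "0 < qpoch_inf q (q\<^sup>2)" "0 < qpoch_inf (q\<^sup>2) (q\<^sup>2)"
    "0 < qpoch q (q\<^sup>2) (l + 1)" "0 < q powr (1/4)"
    using p q by (auto intro: qpoch_inf_pos qpoch_pos)
  ultimately show ?thesis
    unfolding qfact_eq_qpoch[OF q(1)] qhalf_poch_eq_qpoch[OF q(1)] qpi_def powr
    using p by (subst cancel) auto
qed

theorem mainTheorem7:
  fixes q :: real and l :: nat
  assumes "0 < q" and "q < 1"
  shows "q\<^sup>2 * (1 + q)\<^sup>2 * qnum q (real (l + 1)) + q ^ (2 * l + 4)
      + qfact q (l + 1) *
        (\<Sum>m. (let n = Suc m in
           (qhalf_poch q n)\<^sup>2 / (qfact q (n + 1) * qfact q (l + n + 1))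
             * q ^ (2 * (l + 2) * (n + 1))))
    = (1 + q)\<^sup>2 * (qfact q (l + 1))\<^sup>2 / (qpi q * (qhalf_poch q (l + 1))\<^sup>2) * q powr (9/4)"
  unfolding series_eq_qgauss_sum[OF assms] qgauss_sum_at_even_power[OF assms] qpi_expression_eq[OF assms] ..

end
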